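(* In the coding module below, if the field size satisfies $q\ge n$, then for each $j$ a value $\alpha_j\in\mathbb{F}_q$ satisfying the module's requirement exists, and the resulting linear combination $\mathbf{g}$ has the property that every receiver whose next unseen packet has arrived at the sender and that successfully receives $\mathbf{g}$ sees its next unseen packet.
   Context: A sender holds packets $\mathbf{p}_1,\mathbf{p}_2,\dots$ (vectors over $\mathbb{F}_q$, indexed by arrival order) and broadcasts linear combinations to $n$ receivers; via feedback it knows each receiver's knowledge space (the set of linear combinations of packets the receiver can compute). A receiver has seen $\mathbf{p}_k$ if it can compute $\mathbf{p}_k+\mathbf{q}$ where $\mathbf{q}$ is a linear combination of packets with index greater than $k$. If receiver $r$ has seen $\mathbf{p}_k$, its witness $\mathbf{W}_r(\mathbf{p}_k)$ is the unique linear combination known to $r$ of the form $\mathbf{p}_k+\mathbf{q}$ where $\mathbf{q}$ involves only packets of index greater than $k$ that $r$ has not seen. A receiver's next unseen packet is its lowest-index unseen packet. Coding module: let $u_1<\dots<u_m$ be the distinct indices of the next unseen packets of the receivers whose next unseen packet has arrived at the sender, and $R(u_i)$ the set of such receivers whose next unseen packet is $\mathbf{p}_{u_i}$. For $j=1$ to $m$: for each $r\in R(u_j)$ (which has seen $\mathbf{p}_{u_i}$ for all $i<j$), let $\mathbf{y}_r=\sum_{i=1}^{j-1}\alpha_i\mathbf{W}_r(\mathbf{p}_{u_i})$, and pick $\alpha_j\in\mathbb{F}_q$ different from the coefficient of $\mathbf{p}_{u_j}$ in $\mathbf{y}_r$ for every $r\in R(u_j)$. Transmit $\mathbf{g}=\sum_{i=1}^m\alpha_i\mathbf{p}_{u_i}$.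 *)

theory Defs
  imports Main
begin

text \<open>Packets are indexed 0,1,2,... by arrival order; packets 0..N-1 have arrived.
A linear combination of packets is represented by its coefficient vector
v :: nat => 'a (coefficient of packet i is v i). A knowledge space is a set
of such coefficient vectors.\<close>

definition subspace_fn :: "(nat \<Rightarrow> 'a::field) set \<Rightarrow> bool" where
  "subspace_fn K \<longleftrightarrow> (\<lambda>_. 0) \<in> K \<and> (\<forall>v\<in>K. \<forall>w\<in>K. (\<lambda>i. v i + w i) \<in> K)
     \<and> (\<forall>c. \<forall>v\<in>K. (\<lambda>i. c * v i) \<in> K)"

definition seen :: "(nat \<Rightarrow> 'a::field) set \<Rightarrow> nat \<Rightarrow> bool" where
  "seen K k \<longleftrightarrow> (\<exists>v\<in>K. v k = 1 \<and> (\<forall>i<k. v i = 0))"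

definition next_unseen :: "(nat \<Rightarrow> 'a::field) set \<Rightarrow> nat" where
  "next_unseen K = (LEAST k. \<not> seen K k)"

definition witness :: "(nat \<Rightarrow> 'a::field) set \<Rightarrow> nat \<Rightarrow> (nat \<Rightarrow> 'a)" where
  "witness K k = (THE v. v \<in> K \<and> v k = 1 \<and> (\<forall>i<k. v i = 0) \<and> (\<forall>i>k. seen K i \<longrightarrow> v i = 0))"

definition extend :: "(nat \<Rightarrow> 'a::field) set \<Rightarrow> (nat \<Rightarrow> 'a) \<Rightarrow> (nat \<Rightarrow> 'a) set" where
  "extend K g = {(\<lambda>i. v i + c * g i) | v c. v \<in> K}"

end

theory Submission
  imports Defs
begin

text \<open>Every receiver r with next unseen packet u already knows, as a combination of its
witnesses, the part y_r of g on the packets u' < u; subtracting y_r from g and dividing by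
the coefficient g u - y_r u, which is nonzero by the choice of \<alpha>_u, yields p_u plus packets
of larger index only. Such an \<alpha>_u exists because the receivers of R(u) forbid at most
|R(u)| values, and |R(u)| < n \<le> q unless u is the smallest next unseen index, when all the
forbidden values are 0.\<close>

lemma subspace_fn_add: "subspace_fn K \<Longrightarrow> v \<in> K \<Longrightarrow> w \<in> K \<Longrightarrow> (\<lambda>i. v i + w i) \<in> K"
  unfolding subspace_fn_def by blast

lemma subspace_fn_scale: "subspace_fn K \<Longrightarrow> v \<in> K \<Longrightarrow> (\<lambda>i. c * v i) \<in> K"
  unfolding subspace_fn_def by blast

lemma subspace_fn_diff:
  assumes "subspace_fn K" "v \<in> K" "w \<in> K"
  shows "(\<lambda>i. v i - c * w i) \<in> K"
  using subspace_fn_add[OF assms(1,2) subspace_fn_scale[OF assms(1,3), of "- c"]] by simp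

lemma subspace_fn_sum:
  assumes K: "subspace_fn K" and "finite S" and "\<And>x. x \<in> S \<Longrightarrow> f x \<in> K"
  shows "(\<lambda>i. \<Sum>x\<in>S. c x * f x i) \<in> K"
  using assms(2,3)
proof (induction S rule: finite_induct)
  case empty
  then show ?case using K by (simp add: subspace_fn_def)
next
  case (insert x F)
  then show ?case
    using subspace_fn_add[OF K subspace_fn_scale[OF K, of "f x" "c x"]] by simp
qed

lemma seen_less_next_unseen: "i < next_unseen K \<Longrightarrow> seen K i"
  unfolding next_unseen_def using not_less_Least by blast

definition is_witness :: "(nat \<Rightarrow> 'a::field) set \<Rightarrow> nat \<Rightarrow> (nat \<Rightarrow> 'a) \<Rightarrow> bool" where
  "is_witness K k v \<longleftrightarrow> v \<in> K \<and> v k = 1 \<and> (\<forall>i<k. v i = 0) \<and> (\<forall>i>k. seen K i \<longrightarrow> v i = 0)"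

lemma witness_eq_The: "witness K k = (THE v. is_witness K k v)"
  unfolding witness_def is_witness_def ..

text \<open>Gaussian elimination of the seen positions k+1, ..., k+m, one at a time.\<close>

lemma seen_reduced_upto:
  assumes K: "subspace_fn K" and "seen K k"
  shows "\<exists>v\<in>K. v k = 1 \<and> (\<forall>i<k. v i = 0) \<and> (\<forall>i. k < i \<and> i \<le> k + m \<longrightarrow> seen K i \<longrightarrow> v i = 0)"
proof (induction m)
  case 0
  then show ?case using \<open>seen K k\<close> unfolding seen_def by auto
next
  case (Suc m)
  then obtain v where v: "v \<in> K" "v k = 1" "\<forall>i<k. v i = 0"
    "\<forall>i. k < i \<and> i \<le> k + m \<longrightarrow> seen K i \<longrightarrow> v i = 0" by blast
  define p where "p = k + Suc m"
  show ?case
  proof (cases "seen K p")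
    case False
    then show ?thesis using v by (auto simp: p_def le_Suc_eq intro!: bexI[of _ v])
  next
    case True
    then obtain s where s: "s \<in> K" "s p = 1" "\<forall>i<p. s i = 0" unfolding seen_def by auto
    define w where "w = (\<lambda>i. v i - v p * s i)"
    have "w \<in> K" unfolding w_def using subspace_fn_diff[OF K v(1) s(1)] .
    moreover have "\<forall>i<p. w i = v i" and "w p = 0" using s by (simp_all add: w_def)
    ultimately show ?thesis
      using v by (intro bexI[of _ w]) (auto simp: p_def le_Suc_eq)
  qed
qed

lemma witness_exists:
  assumes "subspace_fn K" and "\<forall>v\<in>K. \<forall>i\<ge>N. v i = 0" and "seen K k"
  shows "\<exists>v. is_witness K k v"
proof -
  obtain v where "v \<in> K" "v k = 1" "\<forall>i<k. v i = 0"
    and reduced: "\<forall>i. k < i \<and> i \<le> k + N \<longrightarrow> seen K i \<longrightarrow> v i = 0"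
    using seen_reduced_upto[OF assms(1,3)] by blast
  moreover have "v i = 0" if "k < i" "seen K i" for i
    using reduced that assms(2) \<open>v \<in> K\<close> by (cases "i \<le> k + N") auto
  ultimately show ?thesis unfolding is_witness_def by blast
qed

text \<open>The difference of two witnesses has a leading nonzero entry at a seen position j > k,
where both witnesses vanish.\<close>

lemma witness_unique:
  assumes K: "subspace_fn K" and v: "is_witness K k v" and w: "is_witness K k w"
  shows "v = w"
proof (rule ccontr)
  assume "v \<noteq> w"
  define d where "d = (\<lambda>i. v i - 1 * w i)"
  have dK: "d \<in> K" using v w unfolding d_def is_witness_def by (blast intro: subspace_fn_diff[OF K])
  have "\<exists>j. d j \<noteq> 0" using \<open>v \<noteq> w\<close> by (auto simp: d_def fun_eq_iff)
  define j where "j = (LEAST j. d j \<noteq> 0)"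
  have dj: "d j \<noteq> 0" unfolding j_def by (rule LeastI_ex) fact
  have below: "\<forall>i<j. d i = 0" unfolding j_def using not_less_Least by blast
  have "k < j"
    using dj v w unfolding is_witness_def d_def by (cases j k rule: linorder_cases) auto
  have "(\<lambda>i. inverse (d j) * d i) \<in> K" using subspace_fn_scale[OF K dK] .
  moreover have "inverse (d j) * d j = 1" using dj by simp
  ultimately have "seen K j" unfolding seen_def using below by (intro bexI) auto
  then show False using dj v w \<open>k < j\<close> unfolding is_witness_def d_def by simp
qed

lemma is_witness_witness:
  assumes "subspace_fn K" and "\<forall>v\<in>K. \<forall>i\<ge>N. v i = 0" and "seen K k"
  shows "is_witness K k (witness K k)"
proof -
  obtain v where "is_witness K k v" using witness_exists[OF assms] ..
  then show ?thesis
    unfolding witness_eq_The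
    using theI[of "is_witness K k" v] witness_unique[OF assms(1)] by blast
qed

lemma witness_on_seen_prefix:
  assumes K: "subspace_fn K" and Z: "\<forall>v\<in>K. \<forall>i\<ge>N. v i = 0"
    and seen: "\<forall>i<u. seen K i" and "k < u" and "i < u"
  shows "witness K k i = (if k = i then 1 else 0)"
  using is_witness_witness[OF K Z seen[rule_format, OF \<open>k < u\<close>]] seen \<open>i < u\<close>
  unfolding is_witness_def by (cases i k rule: linorder_cases) auto

lemma seen_extend_of_witness_combination:
  assumes K: "subspace_fn K" and Z: "\<forall>v\<in>K. \<forall>i\<ge>N. v i = 0"
    and seen: "\<forall>i<u. seen K i" and "finite S" and S: "S \<subseteq> {..<u}"
    and g_below: "\<forall>i<u. g i = (if i \<in> S then \<alpha> i else 0)"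
    and g_at: "g u \<noteq> (\<Sum>k\<in>S. \<alpha> k * witness K k u)"
  shows "seen (extend K g) u"
proof -
  define y where "y = (\<lambda>i. \<Sum>k\<in>S. \<alpha> k * witness K k i)"
  have yK: "y \<in> K"
    unfolding y_def using is_witness_witness[OF K Z] seen S \<open>finite S\<close>
    by (intro subspace_fn_sum[OF K]) (auto simp: is_witness_def)
  have y_below: "y i = g i" if "i < u" for i
  proof -
    have "y i = (\<Sum>k\<in>S. if k = i then \<alpha> k else 0)"
      unfolding y_def using S that
      by (intro sum.cong) (auto simp: witness_on_seen_prefix[OF K Z seen])
    then show ?thesis using \<open>finite S\<close> g_below that by simp
  qed
  define d where "d = g u - y u"
  have "d \<noteq> 0" using g_at by (simp add: d_def y_def)
  define v where "v = (\<lambda>i. (- inverse d) * y i + inverse d * g i)"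
  have "v \<in> extend K g"
    unfolding extend_def v_def using subspace_fn_scale[OF K yK, of "- inverse d"]
    by (intro CollectI exI[of _ "\<lambda>i. - inverse d * y i"] exI[of _ "inverse d"]) simp
  moreover have "v u = inverse d * d" by (simp add: v_def d_def algebra_simps)
  then have "v u = 1" using \<open>d \<noteq> 0\<close> by simp
  moreover have "\<forall>i<u. v i = 0" using y_below by (simp add: v_def)
  ultimately show ?thesis unfolding seen_def by blast
qed

lemma exists_avoiding_values:
  fixes f :: "'b \<Rightarrow> 'a::finite"
  assumes "finite X" and "card X < card (UNIV :: 'a set)"
  shows "\<exists>a. \<forall>x\<in>X. a \<noteq> f x"
proof -
  have "card (f ` X) < card (UNIV :: 'a set)" using card_image_le[OF assms(1), of f] assms(2) by linarith
  then obtain a where "a \<notin> f ` X" by (metis UNIV_I card_mono finite leD subsetI)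
  then show ?thesis by blast
qed

theorem theorem8:
  fixes K :: "'r \<Rightarrow> (nat \<Rightarrow> 'a::{field,finite}) set"
    and Rs :: "'r set" and n N :: nat
  assumes "finite Rs" and "card Rs = n" and "card (UNIV :: 'a set) \<ge> n"
    and "\<forall>r\<in>Rs. subspace_fn (K r)"
    and "\<forall>r\<in>Rs. \<forall>v\<in>K r. \<forall>i\<ge>N. v i = 0"
  defines "A \<equiv> {r\<in>Rs. next_unseen (K r) < N}"
  defines "U \<equiv> (\<lambda>r. next_unseen (K r)) ` A"
  defines "R \<equiv> (\<lambda>u. {r\<in>A. next_unseen (K r) = u})"
  defines "ycoef \<equiv> (\<lambda>(\<alpha>::nat \<Rightarrow> 'a) r u. \<Sum>u'\<in>{u'\<in>U. u' < u}. \<alpha> u' * witness (K r) u' u)"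
  defines "g \<equiv> (\<lambda>(\<alpha>::nat \<Rightarrow> 'a) i. if i \<in> U then \<alpha> i else 0)"
  shows "(\<forall>\<alpha>. \<forall>u\<in>U. \<exists>a. \<forall>r\<in>R u. a \<noteq> ycoef \<alpha> r u)
       \<and> (\<forall>\<alpha>. (\<forall>u\<in>U. \<forall>r\<in>R u. \<alpha> u \<noteq> ycoef \<alpha> r u) \<longrightarrow>
              (\<forall>r\<in>A. seen (extend (K r) (g \<alpha>)) (next_unseen (K r))))"
proof (intro conjI allI ballI impI)
  fix \<alpha> u assume "u \<in> U"
  show "\<exists>a. \<forall>r\<in>R u. a \<noteq> ycoef \<alpha> r u"
  proof (cases "\<exists>u'\<in>U. u' < u")
    case False
    then have no_earlier: "{u'\<in>U. u' < u} = {}" by auto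
    show ?thesis by (intro exI[of _ 1]) (simp add: ycoef_def no_earlier)
  next
    case True
    then obtain r0 where "r0 \<in> Rs" "next_unseen (K r0) < u" unfolding U_def A_def by auto
    then have "R u \<subseteq> Rs - {r0}" unfolding R_def A_def by auto
    then have "card (R u) < n"
      using \<open>r0 \<in> Rs\<close> assms(1,2) by (metis card_Diff1_less card_mono finite_Diff le_less_trans)
    then show ?thesis
      using exists_avoiding_values \<open>R u \<subseteq> Rs - {r0}\<close> assms(1,3)
      by (meson finite_Diff finite_subset le_less_trans not_less)
  qed
next
  fix \<alpha> r assume choice: "\<forall>u\<in>U. \<forall>r\<in>R u. \<alpha> u \<noteq> ycoef \<alpha> r u" and "r \<in> A"
  define u where "u = next_unseen (K r)"
  have "r \<in> Rs" "u \<in> U" "r \<in> R u" using \<open>r \<in> A\<close> by (auto simp: A_def U_def R_def u_def)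
  show "seen (extend (K r) (g \<alpha>)) (next_unseen (K r))"
    unfolding u_def[symmetric]
  proof (rule seen_extend_of_witness_combination[where S = "{u'\<in>U. u' < u}" and \<alpha> = \<alpha>])
    show "finite {u'\<in>U. u' < u}" by simp
    show "g \<alpha> u \<noteq> (\<Sum>k\<in>{u'\<in>U. u' < u}. \<alpha> k * witness (K r) k u)"
      using choice \<open>u \<in> U\<close> \<open>r \<in> R u\<close> by (simp add: g_def ycoef_def)
  qed (use assms(4,5) \<open>r \<in> Rs\<close> seen_less_next_unseen in \<open>auto simp: u_def g_def\<close>)
qed

end
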